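(* Let $n=2$ and $z=x+iy$ with $x,y\in\mathbb{R}$, $y\neq0$. Then $$\psi(x+iy)=\begin{cases}\frac83|y|, & x^2+y^2\le1 \text{ and } |x|\le\frac12,\\[2pt] \frac{|y|}{3|x|^3}, & (|x|-1)^2+y^2\le1 \text{ and } |x|>\frac12,\\[2pt] \frac{8|y|}{3(x^2+y^2)^3}, & (|x|-1)^2+y^2>1\text{ and } x^2+y^2>1.\end{cases}$$
   Context: For $n=2$ and $z\in\mathbb{C}\setminus\mathbb{R}$, $D_z$ is the set of $t\in\mathbb{R}$ with $|t|\le1$, $\left|z\,t\left(z-\frac{\Im z^{2}}{\Im z}\right)\right|\le 1$ and $\left|t\frac{\Im z^{2}}{\Im z}\right|\le 1$, and $$\psi(z)=\frac{1}{|\Im z|}\int_{D_z}\left|t\left(2z-\frac{\Im z^{2}}{\Im z}\right)\right|^2dt.$$ *)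

theory Defs
  imports "HOL-Analysis.Analysis"
begin

definition Dz :: "complex \<Rightarrow> real set" where
  "Dz z = {t::real. \<bar>t\<bar> \<le> 1
      \<and> cmod (z * of_real t * (z - of_real (Im (z^2) / Im z))) \<le> 1
      \<and> \<bar>t * (Im (z^2) / Im z)\<bar> \<le> 1}"

definition psi :: "complex \<Rightarrow> real" where
  "psi z = (1 / \<bar>Im z\<bar>) *
     (LINT t:Dz z|lborel. (cmod (of_real t * (2 * z - of_real (Im (z^2) / Im z))))^2)"

end

theory Submission
  imports Defs
begin

text \<open>For \<open>z = x + iy\<close> one has \<open>Im z\<^sup>2 / Im z = 2x\<close>, \<open>\<bar>z (z - 2x)\<bar> = \<bar>z\<bar> \<bar>z\<^sup>*\<bar> = x\<^sup>2 + y\<^sup>2\<close>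
  and \<open>2z - 2x = 2iy\<close>. So every constraint defining \<open>D\<^sub>z\<close> has the form \<open>\<bar>t\<bar> c \<le> 1\<close>, and
  \<open>D\<^sub>z\<close> is the interval \<open>\<bar>t\<bar> \<le> r\<close> with \<open>1/r = max {1, x\<^sup>2 + y\<^sup>2, 2\<bar>x\<bar>}\<close>; integrating
  \<open>4y\<^sup>2t\<^sup>2\<close> over it gives \<open>\<psi>(z) = 8\<bar>y\<bar>r\<^sup>3/3\<close>. Since \<open>(\<bar>x\<bar> - 1)\<^sup>2 + y\<^sup>2 \<le> 1\<close> iff
  \<open>x\<^sup>2 + y\<^sup>2 \<le> 2\<bar>x\<bar>\<close>, the three regions of the theorem are exactly where the maximum is
  attained by \<open>1\<close>, \<open>2\<bar>x\<bar>\<close> and \<open>x\<^sup>2 + y\<^sup>2\<close> respectively.\<close>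

lemma set_integral_power2_symmetric:
  fixes a :: real
  assumes "a \<ge> 0"
  shows "(LINT t:{-a..a}|lborel. t^2) = 2 * a^3 / 3"
  using integral_power[of "-a" a 2] assms
  by (simp add: set_lebesgue_integral_def mult.commute)

definition Dz_radius :: "real \<Rightarrow> real \<Rightarrow> real" where
  "Dz_radius x y = 1 / max 1 (max (x^2 + y^2) (2 * \<bar>x\<bar>))"

lemma abs_le_Dz_radius_iff:
  "\<bar>t\<bar> \<le> Dz_radius x y \<longleftrightarrow> \<bar>t\<bar> \<le> 1 \<and> \<bar>t\<bar> * (x^2 + y^2) \<le> 1 \<and> \<bar>t * (2 * x)\<bar> \<le> 1"
proof -
  let ?m = "max 1 (max (x^2 + y^2) (2 * \<bar>x\<bar>))"
  have "?m > 0"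
    by (simp add: max.strict_coboundedI1)
  then have "\<bar>t\<bar> \<le> 1 / ?m \<longleftrightarrow> \<bar>t\<bar> * ?m \<le> 1"
    by (simp add: le_divide_eq)
  also have "\<bar>t\<bar> * ?m = max \<bar>t\<bar> (max (\<bar>t\<bar> * (x^2 + y^2)) \<bar>t * (2 * x)\<bar>)"
    by (simp add: max_mult_distrib_left abs_mult)
  finally show ?thesis
    unfolding Dz_radius_def by simp
qed

lemma Dz_Complex:
  fixes x y :: real
  assumes "y \<noteq> 0"
  shows "Dz (Complex x y) = {-Dz_radius x y .. Dz_radius x y}"
proof -
  have Im_ratio: "Im ((Complex x y)^2) / Im (Complex x y) = 2 * x"
    using assms by (simp add: power2_eq_square)
  have shift: "Complex x y - of_real (2 * x) = Complex (-x) y"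
    by (simp add: complex_eq_iff)
  have conj_norm: "cmod (Complex x y) * cmod (Complex (-x) y) = x^2 + y^2"
    by (simp add: cmod_def)
  have norm_constraint:
    "cmod (Complex x y * of_real t * (Complex x y - of_real (2 * x))) = \<bar>t\<bar> * (x^2 + y^2)" for t
    unfolding shift norm_mult norm_of_real by (metis conj_norm mult.assoc mult.commute)
  have "Dz (Complex x y) = {t. \<bar>t\<bar> \<le> Dz_radius x y}"
    unfolding Dz_def Im_ratio norm_constraint abs_le_Dz_radius_iff ..
  also have "\<dots> = {-Dz_radius x y .. Dz_radius x y}"
    by (auto simp: abs_le_iff)
  finally show ?thesis .
qed

lemma psi_Complex:
  fixes x y :: real
  assumes "y \<noteq> 0"
  shows "psi (Complex x y) = 8 * \<bar>y\<bar> * Dz_radius x y ^ 3 / 3"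
proof -
  have Im_ratio: "Im ((Complex x y)^2) / Im (Complex x y) = 2 * x"
    using assms by (simp add: power2_eq_square)
  have "2 * Complex x y - of_real (2 * x) = Complex 0 (2 * y)"
    by (simp add: complex_eq_iff)
  then have integrand:
    "(cmod (of_real t * (2 * Complex x y - of_real (2 * x))))^2 = 4 * y^2 * t^2" for t
    by (simp add: norm_mult cmod_def power_mult_distrib)
  have "psi (Complex x y) = 1 / \<bar>y\<bar> * (4 * y^2) * (LINT t:{-Dz_radius x y..Dz_radius x y}|lborel. t^2)"
    unfolding psi_def Im_ratio Dz_Complex[OF assms] integrand by simp
  also have "1 / \<bar>y\<bar> * (4 * y^2) = 4 * \<bar>y\<bar>"
    using assms by (simp add: field_simps power2_eq_square)
  also have "(LINT t:{-Dz_radius x y..Dz_radius x y}|lborel. t^2) = 2 * Dz_radius x y ^ 3 / 3"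
    by (simp add: set_integral_power2_symmetric Dz_radius_def)
  finally show ?thesis
    by simp
qed

lemma shifted_unit_disc_iff:
  fixes x y :: real
  shows "(\<bar>x\<bar> - 1)^2 + y^2 \<le> 1 \<longleftrightarrow> x^2 + y^2 \<le> 2 * \<bar>x\<bar>"
  by (simp add: power2_eq_square algebra_simps)

theorem mainTheorem7:
  fixes x y :: real
  assumes "y \<noteq> 0"
  shows "(x^2 + y^2 \<le> 1 \<and> \<bar>x\<bar> \<le> 1/2 \<longrightarrow> psi (Complex x y) = 8/3 * \<bar>y\<bar>)
       \<and> ((\<bar>x\<bar> - 1)^2 + y^2 \<le> 1 \<and> \<bar>x\<bar> > 1/2 \<longrightarrow> psi (Complex x y) = \<bar>y\<bar> / (3 * \<bar>x\<bar>^3))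
       \<and> ((\<bar>x\<bar> - 1)^2 + y^2 > 1 \<and> x^2 + y^2 > 1 \<longrightarrow> psi (Complex x y) = 8 * \<bar>y\<bar> / (3 * (x^2 + y^2)^3))"
proof (intro conjI impI)
  assume "x^2 + y^2 \<le> 1 \<and> \<bar>x\<bar> \<le> 1/2"
  then have "Dz_radius x y = 1"
    by (simp add: Dz_radius_def max_def)
  then show "psi (Complex x y) = 8/3 * \<bar>y\<bar>"
    by (simp add: psi_Complex[OF assms])
next
  assume "(\<bar>x\<bar> - 1)^2 + y^2 \<le> 1 \<and> \<bar>x\<bar> > 1/2"
  then have "Dz_radius x y = 1 / (2 * \<bar>x\<bar>)"
    by (simp add: shifted_unit_disc_iff Dz_radius_def max_def)
  then show "psi (Complex x y) = \<bar>y\<bar> / (3 * \<bar>x\<bar>^3)"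
    by (simp add: psi_Complex[OF assms] power_divide power_mult_distrib)
next
  assume "(\<bar>x\<bar> - 1)^2 + y^2 > 1 \<and> x^2 + y^2 > 1"
  then have "Dz_radius x y = 1 / (x^2 + y^2)"
    using shifted_unit_disc_iff[of x y] by (simp add: Dz_radius_def max_def)
  then show "psi (Complex x y) = 8 * \<bar>y\<bar> / (3 * (x^2 + y^2)^3)"
    by (simp add: psi_Complex[OF assms] power_divide)
qed

end
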